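(* Let $d\geq 2$ and let $n\geq d^{6d\log d}$ be an integer. Then for every lower set $Q\subset\mathbb{Z}_+^d$ with $|Q|=n$, $$|M(Q)|\leq \prod_{k=1}^{d-1}\Big(1+\frac{1}{k^2}\Big)\,n^{1-\frac{1}{d}}<\frac{\sinh\pi}{\pi}\,n^{1-\frac{1}{d}}.$$
   Context: $\mathbb{Z}_+=\{0,1,2,\dots\}$. A set $Q\subset\mathbb{Z}_+^d$ is a lower set if whenever $q\in Q$ and $q'\in\mathbb{Z}_+^d$ satisfies $q'_i\leq q_i$ for all $i$, then $q'\in Q$. For $q,q'\in\mathbb{Z}_+^d$ write $q\succ q'$ if $q_i\geq q'_i$ for all $i=1,\dots,d$. A subset $Q'$ of a lower set $Q$ is called available if for every $q'\in Q'$ there is no $q\in Q\setminus\{q'\}$ with $q\succ q'$. $M(Q)$ denotes the maximal available subset of $Q$, i.e. the set of all $q'\in Q$ such that no $q\in Q\setminus\{q'\}$ satisfies $q\succ q'$. $\log$ is the natural logarithm. *)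

theory Defs
  imports "HOL-Analysis.Analysis"
begin

text \<open>Points of Z_+^d are represented as lists of naturals of length d.\<close>

definition pts :: "nat \<Rightarrow> nat list set" where
  "pts d = {q. length q = d}"

definition dom :: "nat list \<Rightarrow> nat list \<Rightarrow> bool" where
  "dom q q' \<longleftrightarrow> length q = length q' \<and> (\<forall>i<length q. q' ! i \<le> q ! i)"

definition lower_set :: "nat \<Rightarrow> nat list set \<Rightarrow> bool" where
  "lower_set d Q \<longleftrightarrow> Q \<subseteq> pts d \<and> (\<forall>q\<in>Q. \<forall>q'\<in>pts d. dom q q' \<longrightarrow> q' \<in> Q)"

definition Mset :: "nat list set \<Rightarrow> nat list set" where
  "Mset Q = {q'\<in>Q. \<not> (\<exists>q\<in>Q - {q'}. dom q q')}"

end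

theory Submission
  imports Defs
begin

(* Slice a lower set Q in Z_+^(d+1) by its first coordinate into lower sets S_0, S_1, ... of
   Z_+^d, decreasing in j.  A maximal element of Q with first coordinate j comes from
   M(S_j) - S_(j+1), so the number y_j of them satisfies y_j <= |S_j| - |S_(j+1)| and, by
   induction on d, y_j <= c_d |S_j|^(1 - 1/d).  The discrete analogue of integrating the
   derivative of F^(1 + 1/d),
   (sum y_j)^(1 + 1/d) <= (1 + 1/d) sum_j (sum_(i>=j) y_i)^(1/d) y_j <= (1 + 1/d) c_d |Q|,
   then gives |M(Q)| <= c_d |Q|^(1 - 1/d) with c_d = (d^d / d!)^(1/d) < e.  The product
   prod_(k<d) (1 + 1/k^2) exceeds e once d >= 4 (d = 2, 3 are checked by hand), and by Euler's
   product for sin(pi z) at z = i it increases to sinh(pi)/pi. *)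

lemma prod_one_plus_inverse_squares_tendsto:
  "(\<lambda>n. \<Prod>k=1..n. 1 + 1 / (real k)^2) \<longlonglongrightarrow> sinh pi / pi"
proof -
  have "(\<lambda>n. \<Prod>k=1..n. 1 - \<i>^2 / of_nat k^2) \<longlonglongrightarrow> sin (of_real pi * \<i>) / (of_real pi * \<i>)"
    using tendsto_divide[OF sin_product_formula_complex[of \<i>] tendsto_const[of "of_real pi * \<i>"]]
    by simp
  also have "(\<lambda>n. \<Prod>k=1..n. 1 - \<i>^2 / of_nat k^2)
      = (\<lambda>n. of_real (\<Prod>k=1..n. 1 + 1 / (real k)^2))"
    by (simp add: of_real_prod)
  also have "sin (of_real pi * \<i>) / (of_real pi * \<i>) = of_real (sinh pi / pi)"
  proof -
    have "sinh (of_real pi :: complex) = of_real (sinh pi)"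
      by (simp add: sinh_def scaleR_conv_of_real flip: exp_of_real)
    moreover have "sin (\<i> * of_real pi) = \<i> * sinh (of_real pi :: complex)"
      using sinh_conv_sin[of "of_real pi"] by (simp add: field_simps)
    ultimately show ?thesis
      by (simp add: mult.commute field_simps)
  qed
  finally show ?thesis
    by (simp only: tendsto_of_real_iff)
qed

lemma strict_mono_prod_one_plus_inverse_squares:
  "strict_mono (\<lambda>n. \<Prod>k=1..n. 1 + 1 / (real k)^2)"
proof (rule strict_monoI_Suc)
  fix n
  have "0 < (\<Prod>k=1..n. 1 + 1 / (real k)^2)"
    by (intro prod_pos) (simp add: add_pos_nonneg)
  then show "(\<Prod>k=1..n. 1 + 1 / (real k)^2) < (\<Prod>k=1..Suc n. 1 + 1 / (real k)^2)"
    by (simp add: prod.nat_ivl_Suc')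
qed

lemma prod_one_plus_inverse_squares_less:
  "(\<Prod>k=1..n. 1 + 1 / (real k)^2) < sinh pi / pi"
proof -
  let ?P = "\<lambda>n. \<Prod>k=1..n. 1 + 1 / (real k)^2"
  have "?P n < ?P (Suc n)"
    using strict_mono_prod_one_plus_inverse_squares by (simp add: strict_mono_Suc_iff)
  also have "\<dots> \<le> sinh pi / pi"
    by (rule incseq_le[OF strict_mono_mono prod_one_plus_inverse_squares_tendsto])
      (rule strict_mono_prod_one_plus_inverse_squares)
  finally show ?thesis .
qed

lemma prod_one_plus_inverse_squares_ge:
  assumes "3 \<le> n"
  shows "25 / 9 \<le> (\<Prod>k=1..n. 1 + 1 / (real k)^2)"
proof -
  have "(\<Prod>k=1..3. 1 + 1 / (real k)^2) \<le> (\<Prod>k=1..n. 1 + 1 / (real k)^2)"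
    using strict_mono_mono[OF strict_mono_prod_one_plus_inverse_squares] assms
    by (rule monoD)
  moreover have "{1..3::nat} = {1, 2, 3}" by auto
  ultimately show ?thesis by simp
qed

lemma power_div_fact_le_exp:
  fixes x :: real
  assumes "0 \<le> x"
  shows "x ^ n / fact n \<le> exp x"
proof -
  have "(\<Sum>k\<in>{n}. x ^ k /\<^sub>R fact k) \<le> (\<Sum>k. x ^ k /\<^sub>R fact k)"
    using assms by (intro sum_le_suminf exp_converges[THEN sums_summable]) auto
  also have "\<dots> = exp x"
    by (simp only: exp_def)
  finally show ?thesis
    by (simp add: divide_inverse mult.commute)
qed

definition Mset_const :: "nat \<Rightarrow> real" where
  "Mset_const d = (real d ^ d / fact d) powr (1 / real d)"

lemma Mset_const_pos: "0 < Mset_const d"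
  by (cases "d = 0") (simp_all add: Mset_const_def)

lemma Mset_const_power:
  assumes "1 \<le> d"
  shows "Mset_const d ^ d = real d ^ d / fact d"
proof -
  have "Mset_const d ^ d = Mset_const d powr real d"
    using Mset_const_pos by (simp add: powr_realpow)
  also have "\<dots> = real d ^ d / fact d"
    using assms by (simp add: Mset_const_def powr_powr)
  finally show ?thesis .
qed

lemma Mset_const_Suc:
  assumes "1 \<le> d"
  shows "((1 + 1 / real d) * Mset_const d) powr (1 / (1 + 1 / real d)) = Mset_const (Suc d)"
proof -
  define K where "K = (1 + 1 / real d) * Mset_const d"
  have "K > 0"
    unfolding K_def using Mset_const_pos by (simp add: add_pos_nonneg)
  have "(1 + 1 / real d) * real d = real (Suc d)"
    using assms by (simp add: field_simps)
  then have "K ^ d = real (Suc d) ^ d / fact d"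
    using Mset_const_power[OF assms]
    by (simp add: K_def power_mult_distrib flip: power_mult_distrib[of _ "real d"])
  also have "\<dots> = real (Suc d) ^ Suc d / fact (Suc d)"
    by (simp add: fact_Suc del: of_nat_Suc)
  finally have K_power: "K ^ d = real (Suc d) ^ Suc d / fact (Suc d)" .
  have "1 / (1 + 1 / real d) = real d * (1 / real (Suc d))"
    using assms by (simp add: field_simps)
  then have "K powr (1 / (1 + 1 / real d)) = (K powr real d) powr (1 / real (Suc d))"
    by (simp only: powr_powr)
  also have "\<dots> = Mset_const (Suc d)"
    using \<open>K > 0\<close> by (simp only: powr_realpow K_power Mset_const_def)
  finally show ?thesis
    unfolding K_def .
qed

lemma Mset_const_le_prod_one_plus_inverse_squares:
  assumes "2 \<le> d"
  shows "Mset_const d \<le> (\<Prod>k=1..d-1. 1 + 1 / (real k)^2)"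
proof -
  let ?C = "\<Prod>k=1..d-1. 1 + 1 / (real k)^2"
  have "?C > 0"
    by (intro prod_pos) (simp add: add_pos_nonneg)
  have "real d ^ d / fact d \<le> ?C ^ d"
  proof -
    consider "d = 2" | "d = 3" | "4 \<le> d"
      using assms by linarith
    then show ?thesis
    proof cases
      case 1
      then show ?thesis
        by (simp add: fact_numeral)
    next
      case 2
      moreover have "{1..2::nat} = {1, 2}" by auto
      ultimately show ?thesis
        by (simp add: fact_numeral power3_eq_cube)
    next
      case 3
      have "real d ^ d / fact d \<le> exp 1 ^ d"
        using power_div_fact_le_exp[of "real d" d] by (simp add: exp_of_nat_mult[symmetric])
      also have "\<dots> \<le> ?C ^ d"
      proof (rule power_mono)
        have "exp 1 < (272 / 100 :: real)"
          by (rule e_less_272)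
        also have "\<dots> \<le> 25 / 9"
          by simp
        also have "\<dots> \<le> ?C"
          using 3 by (intro prod_one_plus_inverse_squares_ge) simp
        finally show "exp 1 \<le> ?C"
          by simp
      qed simp
      finally show ?thesis .
    qed
  qed
  then have "Mset_const d ^ d \<le> ?C ^ d"
    using assms by (simp add: Mset_const_power)
  then show ?thesis
    using power_mono_iff[of "Mset_const d" ?C d] Mset_const_pos[of d] \<open>?C > 0\<close> assms by simp
qed

lemma powr_one_plus_add_le:
  fixes s y b :: real
  assumes "0 < b" "0 \<le> s" "0 \<le> y"
  shows "(s + y) powr (1 + b) \<le> s powr (1 + b) + (1 + b) * (s + y) powr b * y"
proof (cases "s = 0 \<or> y = 0")
  case True
  then have "(s + y) powr (1 + b) = s powr (1 + b) + (s + y) powr b * y"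
    using assms by (auto simp: powr_add)
  moreover have "0 \<le> b * (s + y) powr b * y"
    using assms by simp
  ultimately show ?thesis
    by (simp add: algebra_simps)
next
  case False
  with assms have "0 < s" "s < s + y"
    by auto
  have deriv: "DERIV (\<lambda>t. t powr (1 + b)) t :> (1 + b) * t powr b" if "s \<le> t" for t
    using that \<open>0 < s\<close> by (auto intro!: derivative_eq_intros simp: powr_diff field_simps)
  obtain z where z: "s < z" "z < s + y"
    and mvt: "(s + y) powr (1 + b) - s powr (1 + b) = (s + y - s) * ((1 + b) * z powr b)"
    using MVT2[OF \<open>s < s + y\<close> deriv] by blast
  have "z powr b \<le> (s + y) powr b"
    using z \<open>0 < s\<close> assms by (intro powr_mono2) auto
  then have "(s + y - s) * ((1 + b) * z powr b) \<le> (1 + b) * (s + y) powr b * y"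
    using assms by (simp add: mult_left_mono mult.commute mult.left_commute)
  then show ?thesis
    using mvt by simp
qed

lemma powr_sum_le_sum_tail_powr:
  fixes y :: "nat \<Rightarrow> real"
  assumes "0 < b" and "\<forall>j<h. 0 \<le> y j"
  shows "(\<Sum>j<h. y j) powr (1 + b) \<le> (1 + b) * (\<Sum>j<h. (\<Sum>i=j..<h. y i) powr b * y j)"
  using assms(2)
proof (induction h arbitrary: y)
  case 0
  then show ?case by simp
next
  case (Suc h)
  let ?z = "\<lambda>i. y (Suc i)"
  have IH: "(\<Sum>j<h. ?z j) powr (1 + b) \<le> (1 + b) * (\<Sum>j<h. (\<Sum>i=j..<h. ?z i) powr b * ?z j)"
    using Suc by auto
  have sum_shift: "(\<Sum>j<Suc h. y j) = y 0 + (\<Sum>j<h. ?z j)"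
    by (rule sum.lessThan_Suc_shift)
  have tail_sum_shift: "(\<Sum>j<Suc h. (\<Sum>i=j..<Suc h. y i) powr b * y j)
      = (y 0 + (\<Sum>j<h. ?z j)) powr b * y 0 + (\<Sum>j<h. (\<Sum>i=j..<h. ?z i) powr b * ?z j)"
    by (subst sum.lessThan_Suc_shift)
      (simp only: sum.shift_bounds_Suc_ivl atLeast0LessThan sum_shift)
  have nonneg: "0 \<le> (\<Sum>j<h. ?z j)" "0 \<le> y 0"
    using Suc.prems by (auto intro: sum_nonneg)
  have "(\<Sum>j<Suc h. y j) powr (1 + b)
      \<le> (\<Sum>j<h. ?z j) powr (1 + b) + (1 + b) * (y 0 + (\<Sum>j<h. ?z j)) powr b * y 0"
    unfolding sum_shift using powr_one_plus_add_le[OF assms(1) nonneg] by (simp only: add.commute)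
  also have "\<dots> \<le> (1 + b) * (\<Sum>j<Suc h. (\<Sum>i=j..<Suc h. y i) powr b * y j)"
    unfolding tail_sum_shift distrib_left using IH by (simp only: mult.assoc)
  finally show ?case .
qed

lemma powr_sum_le_of_decrement_bounds:
  fixes x y :: "nat \<Rightarrow> real" and b c :: real
  assumes "0 < b" and "x h = 0"
    and y_nonneg: "\<And>j. j < h \<Longrightarrow> 0 \<le> y j"
    and y_le_decrement: "\<And>j. j < h \<Longrightarrow> y j \<le> x j - x (Suc j)"
    and y_le_powr: "\<And>j. j < h \<Longrightarrow> y j \<le> c * x j powr (1 - b)"
  shows "(\<Sum>j<h. y j) powr (1 + b) \<le> (1 + b) * c * (\<Sum>j<h. x j)"
proof -
  have tail_le: "(\<Sum>i=j..<h. y i) \<le> x j" if "j \<le> h" for j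
  proof -
    have "(\<Sum>i=j..<h. y i) \<le> (\<Sum>i=j..<h. x i - x (Suc i))"
      using y_le_decrement by (intro sum_mono) auto
    also have "\<dots> = x j - x h"
      using sum_Suc_diff'[OF that, of x] by (simp add: sum_negf[symmetric] sum_subtractf)
    finally show ?thesis
      using \<open>x h = 0\<close> by simp
  qed
  have term_le: "(\<Sum>i=j..<h. y i) powr b * y j \<le> c * x j" if "j < h" for j
  proof -
    have "0 \<le> (\<Sum>i=j..<h. y i)"
      using y_nonneg by (intro sum_nonneg) auto
    then have "0 \<le> x j"
      using tail_le[of j] that by simp
    have "(\<Sum>i=j..<h. y i) powr b * y j \<le> x j powr b * y j"
      using tail_le[of j] that y_nonneg[OF that] \<open>0 < b\<close> \<open>0 \<le> (\<Sum>i=j..<h. y i)\<close>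
      by (intro mult_right_mono powr_mono2) auto
    also have "\<dots> \<le> x j powr b * (c * x j powr (1 - b))"
      using y_le_powr[OF that] by (intro mult_left_mono) auto
    also have "\<dots> = c * x j"
      using \<open>0 \<le> x j\<close> by (simp add: powr_add[symmetric] mult.left_commute)
    finally show ?thesis .
  qed
  have "(\<Sum>j<h. y j) powr (1 + b) \<le> (1 + b) * (\<Sum>j<h. (\<Sum>i=j..<h. y i) powr b * y j)"
    using powr_sum_le_sum_tail_powr[OF \<open>0 < b\<close>] y_nonneg by auto
  also have "\<dots> \<le> (1 + b) * (\<Sum>j<h. c * x j)"
    using \<open>0 < b\<close> term_le by (intro mult_left_mono sum_mono) auto
  finally show ?thesis
    by (simp add: sum_distrib_left mult.assoc)
qed

lemma le_powr_of_powr_le_mult: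
  fixes m K n a :: real
  assumes "0 < a" "0 \<le> m" "0 \<le> K" "0 \<le> n" and "m powr a \<le> K * n"
  shows "m \<le> K powr (1 / a) * n powr (1 / a)"
proof -
  have "m = (m powr a) powr (1 / a)"
    using assms by (simp add: powr_powr)
  also have "\<dots> \<le> (K * n) powr (1 / a)"
    using assms by (intro powr_mono2) auto
  also have "\<dots> = K powr (1 / a) * n powr (1 / a)"
    using assms by (simp add: powr_mult)
  finally show ?thesis .
qed

lemma le_Mset_const_Suc_mult_powr:
  fixes m n :: real
  assumes "1 \<le> d" "0 \<le> m" "0 \<le> n"
    and "m powr (1 + 1 / real d) \<le> (1 + 1 / real d) * Mset_const d * n"
  shows "m \<le> Mset_const (Suc d) * n powr (1 - 1 / real (Suc d))"
proof -
  have "m \<le> ((1 + 1 / real d) * Mset_const d) powr (1 / (1 + 1 / real d))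
      * n powr (1 / (1 + 1 / real d))"
    using assms Mset_const_pos[of d] by (intro le_powr_of_powr_le_mult) (auto simp: add_pos_nonneg)
  moreover have "1 / (1 + 1 / real d) = 1 - 1 / real (Suc d)"
    using assms(1) by (simp add: field_simps)
  ultimately show ?thesis
    using Mset_const_Suc[OF assms(1)] by simp
qed

lemma dom_refl: "dom q q"
  by (simp add: dom_def)

lemma dom_Cons: "dom (a # q) (b # q') \<longleftrightarrow> b \<le> a \<and> dom q q'"
  by (auto simp: dom_def All_less_Suc2)

lemma Mset_subset: "Mset Q \<subseteq> Q"
  by (auto simp: Mset_def)

lemma card_Mset_le_one:
  assumes "lower_set 1 Q" "finite Q"
  shows "card (Mset Q) \<le> 1"
proof -
  have "p = q" if "p \<in> Mset Q" "q \<in> Mset Q" for p q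
  proof -
    have "length p = 1" "length q = 1"
      using that assms(1) Mset_subset by (auto simp: lower_set_def pts_def)
    then have "dom p q \<or> dom q p"
      by (auto simp: dom_def)
    then show "p = q"
      using that by (auto simp: Mset_def)
  qed
  then show ?thesis
    using finite_subset[OF Mset_subset assms(2)] by (simp add: card_le_Suc0_iff_eq)
qed

definition slice :: "nat list set \<Rightarrow> nat \<Rightarrow> nat list set" where
  "slice Q j = {q. j # q \<in> Q}"

lemma finite_slice: "finite Q \<Longrightarrow> finite (slice Q j)"
  unfolding slice_def by (rule finite_vimageI[of Q "Cons j", unfolded vimage_def]) auto

lemma lower_set_slice: "lower_set (Suc d) Q \<Longrightarrow> lower_set d (slice Q j)"
  unfolding lower_set_def pts_def slice_def by (force simp: dom_Cons)

lemma slice_Suc_subset: "lower_set (Suc d) Q \<Longrightarrow> slice Q (Suc j) \<subseteq> slice Q j"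
  unfolding lower_set_def pts_def slice_def by (force simp: dom_Cons dom_refl)

lemma lower_set_eq_UN_slice:
  assumes "lower_set (Suc d) Q" "\<forall>q\<in>Q. hd q < h"
  shows "Q = (\<Union>j<h. Cons j ` slice Q j)"
proof
  show "Q \<subseteq> (\<Union>j<h. Cons j ` slice Q j)"
  proof
    fix q assume "q \<in> Q"
    then have "length q = Suc d"
      using assms(1) by (auto simp: lower_set_def pts_def)
    then obtain j q' where "q = j # q'"
      by (cases q) auto
    then show "q \<in> (\<Union>j<h. Cons j ` slice Q j)"
      using \<open>q \<in> Q\<close> assms(2) by (force simp: slice_def)
  qed
qed (auto simp: slice_def)

lemma Mset_subset_UN_slice:
  assumes "lower_set (Suc d) Q" "\<forall>q\<in>Q. hd q < h"
  shows "Mset Q \<subseteq> (\<Union>j<h. Cons j ` (Mset (slice Q j) - slice Q (Suc j)))"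
proof
  fix q assume "q \<in> Mset Q"
  then have "q \<in> Q" and undominated: "\<And>p. p \<in> Q \<Longrightarrow> p \<noteq> q \<Longrightarrow> \<not> dom p q"
    by (auto simp: Mset_def)
  then have "length q = Suc d"
    using assms(1) by (auto simp: lower_set_def pts_def)
  then obtain j q' where q: "q = j # q'"
    by (cases q) auto
  have "j < h"
    using assms(2) \<open>q \<in> Q\<close> q by auto
  have "q' \<in> Mset (slice Q j)"
    unfolding Mset_def
  proof (intro CollectI conjI notI)
    show "q' \<in> slice Q j"
      using \<open>q \<in> Q\<close> q by (simp add: slice_def)
  next
    assume "\<exists>p\<in>slice Q j - {q'}. dom p q'"
    then obtain p where "j # p \<in> Q" "p \<noteq> q'" "dom p q'"
      by (auto simp: slice_def)
    then show False
      using undominated[of "j # p"] q by (simp add: dom_Cons)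
  qed
  moreover have "q' \<notin> slice Q (Suc j)"
    using undominated[of "Suc j # q'"] q by (auto simp: slice_def dom_Cons dom_refl)
  ultimately show "q \<in> (\<Union>j<h. Cons j ` (Mset (slice Q j) - slice Q (Suc j)))"
    using \<open>j < h\<close> q by auto
qed

lemma card_eq_sum_card_slice:
  assumes "lower_set (Suc d) Q" "finite Q" "\<forall>q\<in>Q. hd q < h"
  shows "card Q = (\<Sum>j<h. card (slice Q j))"
proof -
  have "card Q = card (\<Union>j<h. Cons j ` slice Q j)"
    using lower_set_eq_UN_slice[OF assms(1,3)] by simp
  also have "\<dots> = (\<Sum>j<h. card (Cons j ` slice Q j))"
    using finite_slice[OF assms(2)] by (intro card_UN_disjoint) auto
  also have "\<dots> = (\<Sum>j<h. card (slice Q j))"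
    by (intro sum.cong refl card_image) auto
  finally show ?thesis .
qed

lemma card_Mset_le_sum_card_slice:
  assumes "lower_set (Suc d) Q" "finite Q" "\<forall>q\<in>Q. hd q < h"
  shows "card (Mset Q) \<le> (\<Sum>j<h. card (Mset (slice Q j) - slice Q (Suc j)))"
proof -
  have finite: "finite (Mset (slice Q j) - slice Q (Suc j))" for j
    using finite_subset[OF Mset_subset finite_slice[OF assms(2)]] by blast
  have "card (Mset Q) \<le> card (\<Union>j<h. Cons j ` (Mset (slice Q j) - slice Q (Suc j)))"
    using Mset_subset_UN_slice[OF assms(1,3)] finite by (intro card_mono) auto
  also have "\<dots> \<le> (\<Sum>j<h. card (Cons j ` (Mset (slice Q j) - slice Q (Suc j))))"
    by (rule card_UN_le) simp
  also have "\<dots> = (\<Sum>j<h. card (Mset (slice Q j) - slice Q (Suc j)))"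
    by (intro sum.cong refl card_image) auto
  finally show ?thesis .
qed

lemma card_Mset_slice_diff_le:
  assumes "lower_set (Suc d) Q" "finite Q"
  shows "real (card (Mset (slice Q j) - slice Q (Suc j)))
    \<le> real (card (slice Q j)) - real (card (slice Q (Suc j)))"
proof -
  have "card (Mset (slice Q j) - slice Q (Suc j)) \<le> card (slice Q j - slice Q (Suc j))"
    using finite_slice[OF assms(2)] Mset_subset by (intro card_mono) auto
  also have "\<dots> = card (slice Q j) - card (slice Q (Suc j))"
    using finite_slice[OF assms(2)] slice_Suc_subset[OF assms(1)] by (intro card_Diff_subset) auto
  finally have "real (card (Mset (slice Q j) - slice Q (Suc j)))
      \<le> real (card (slice Q j) - card (slice Q (Suc j)))"
    by (simp only: of_nat_le_iff)
  also have "\<dots> = real (card (slice Q j)) - real (card (slice Q (Suc j)))"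
    using card_mono[OF finite_slice[OF assms(2)] slice_Suc_subset[OF assms(1)]] by (rule of_nat_diff)
  finally show ?thesis .
qed

theorem card_Mset_le_Mset_const:
  assumes "1 \<le> d" "lower_set d Q" "finite Q"
  shows "real (card (Mset Q)) \<le> Mset_const d * real (card Q) powr (1 - 1 / real d)"
  using assms
proof (induction d arbitrary: Q rule: nat_induct_at_least)
  case base
  show ?case
  proof (cases "Q = {}")
    case True
    then show ?thesis
      using Mset_subset[of Q] by (simp add: subset_empty)
  next
    case False
    then show ?thesis
      using card_Mset_le_one[OF base] base(2) by (simp add: Mset_const_def)
  qed
next
  case (Suc d)
  obtain h where h: "\<forall>q\<in>Q. hd q < h"
    using finite_nat_set_iff_bounded[of "hd ` Q"] Suc.prems(2) by auto
  define x where "x j = real (card (slice Q j))" for j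
  define y where "y j = real (card (Mset (slice Q j) - slice Q (Suc j)))" for j
  let ?b = "1 / real d"
  have "real (card (Mset Q)) powr (1 + ?b) \<le> (\<Sum>j<h. y j) powr (1 + ?b)"
    using card_Mset_le_sum_card_slice[OF Suc.prems h]
    by (intro powr_mono2) (simp_all add: y_def flip: of_nat_sum)
  also have "\<dots> \<le> (1 + ?b) * Mset_const d * (\<Sum>j<h. x j)"
  proof (rule powr_sum_le_of_decrement_bounds)
    have "slice Q h = {}"
      using h by (auto simp: slice_def)
    then show "x h = 0"
      by (simp add: x_def)
    show "y j \<le> x j - x (Suc j)" for j
      unfolding x_def y_def using card_Mset_slice_diff_le[OF Suc.prems] .
    show "y j \<le> Mset_const d * x j powr (1 - ?b)" for j
    proof -
      have "y j \<le> real (card (Mset (slice Q j)))"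
        unfolding y_def using finite_subset[OF Mset_subset finite_slice[OF Suc.prems(2)]]
        by (intro of_nat_mono card_mono) auto
      also have "\<dots> \<le> Mset_const d * x j powr (1 - ?b)"
        unfolding x_def
        using Suc.IH[OF lower_set_slice[OF Suc.prems(1)] finite_slice[OF Suc.prems(2)]] .
      finally show ?thesis .
    qed
  qed (use Suc.hyps in \<open>simp_all add: y_def\<close>)
  also have "(\<Sum>j<h. x j) = real (card Q)"
    using card_eq_sum_card_slice[OF Suc.prems h] by (simp add: x_def)
  finally show ?case
    using Suc.hyps by (intro le_Mset_const_Suc_mult_powr) auto
qed

theorem lemma1:
  fixes d n :: nat and Q :: "nat list set"
  assumes "d \<ge> 2"
    and "real n \<ge> real d powr (6 * real d * ln (real d))"
    and "lower_set d Q" and "finite Q" and "card Q = n"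
  shows "real (card (Mset Q)) \<le> (\<Prod>k=1..d-1. 1 + 1 / (real k)^2) * real n powr (1 - 1 / real d)
     \<and> (\<Prod>k=1..d-1. 1 + 1 / (real k)^2) * real n powr (1 - 1 / real d)
         < sinh pi / pi * real n powr (1 - 1 / real d)"
proof
  let ?C = "\<Prod>k=1..d-1. 1 + 1 / (real k)^2"
  \<comment> \<open>The size hypothesis on \<open>n\<close> is needed only to exclude \<open>n = 0\<close> in the strict inequality.\<close>
  have "0 < real d powr (6 * real d * ln (real d))"
    using assms(1) by simp
  then have "0 < real n"
    using assms(2) by linarith
  have "real (card (Mset Q)) \<le> Mset_const d * real n powr (1 - 1 / real d)"
    using card_Mset_le_Mset_const[of d Q] assms(1,3,4,5) by simp
  also have "\<dots> \<le> ?C * real n powr (1 - 1 / real d)"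
    using Mset_const_le_prod_one_plus_inverse_squares[OF assms(1)] by (intro mult_right_mono) auto
  finally show "real (card (Mset Q)) \<le> ?C * real n powr (1 - 1 / real d)" .
  show "?C * real n powr (1 - 1 / real d) < sinh pi / pi * real n powr (1 - 1 / real d)"
    using prod_one_plus_inverse_squares_less[of "d - 1"] \<open>0 < real n\<close>
    by (intro mult_strict_right_mono) auto
qed

end
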